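(* Let $k\ge 1$, let $0<\alpha\le 1$, and let $G=(\mathcal{X},\mathcal{A},\mu,V)$ be a $k$-player game. Let $G_{\perp}$ be the $k$-player game with question sets $\mathcal{X}^t\cup\{\perp\}$ ($t\in[k]$, where $\perp$ is a new symbol) and the same answer sets, in which the referee samples $(x^1,\dots,x^k)\sim\mu$, independently for each $t\in[k]$ replaces $x^t$ by $\perp$ with probability $\alpha$, sends the resulting questions to the players, and accepts if at least one question equals $\perp$, and otherwise accepts iff $V((x^1,\dots,x^k),(a^1,\dots,a^k))=1$. Then $G_\perp$ is an $\alpha$-anchored game, and $$\mathrm{val}(G_\perp)=1-(1-\alpha)^k\,(1-\mathrm{val}(G)),\qquad \mathrm{val}^*(G_\perp)=1-(1-\alpha)^k\,(1-\mathrm{val}^*(G)).$$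
   Context: A $k$-player game $G=(\mathcal{X},\mathcal{A},\mu,V)$ consists of finite question sets with $\mathcal{X}=\mathcal{X}^1\times\cdots\times\mathcal{X}^k$, finite answer sets with $\mathcal{A}=\mathcal{A}^1\times\cdots\times\mathcal{A}^k$, a probability measure $\mu$ on $\mathcal{X}$, and a predicate $V:\mathcal{X}\times\mathcal{A}\to\{0,1\}$. The referee samples $x=(x^1,\dots,x^k)\sim\mu$, sends $x^t$ to player $t$, receives $a^t\in\mathcal{A}^t$, and the players win iff $V(x,a)=1$. The classical value is $\mathrm{val}(G)=\sup_{f^1,\dots,f^k}\mathbb{E}_{x\sim\mu}V(x,(f^1(x^1),\dots,f^k(x^k)))$ over functions $f^t:\mathcal{X}^t\to\mathcal{A}^t$. The entangled value is $\mathrm{val}^*(G)=\sup \mathbb{E}_{x\sim\mu}\sum_{a:V(x,a)=1}\langle\psi|M^1(x^1,a^1)\otimes\cdots\otimes M^k(x^k,a^k)|\psi\rangle$, the supremum over all integers $d\ge2$, unit vectors $|\psi\rangle\in(\mathbb{C}^d)^{\otimes k}$, and for each player $t$ and question $x^t$ a POVM $\{M^t(x^t,a^t)\}_{a^t\in\mathcal{A}^t}$ on $\mathbb{C}^d$. A $k$-player game is $\alpha$-anchored if there exist subsets $\mathcal{X}^t_\perp\subseteq\mathcal{X}^t$ ($t\in[k]$) such that (1) for each $t$ the marginal probability under $\mu$ that $x^t\in\mathcal{X}^t_\perp$ is at least $\alpha$, and (2) for all $x\in\mathcal{X}$, $\mu(x)=\mu(x|_{\overline{F}_x})\prod_{t\in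 F_x}\mu(x^t)$, where $F_x=\{t\in[k]:x^t\in\mathcal{X}^t_\perp\}$, $\overline{F}_x=[k]\setminus F_x$, $\mu(x|_S)=\sum_{x':x'|_S=x|_S}\mu(x')$ is the marginal probability of the restriction of $x$ to the coordinates in $S$ (equal to $1$ for $S=\emptyset$), and $\mu(x^t)$ is the marginal probability of the $t$-th coordinate. *)

theory Defs
  imports Complex_Main "HOL-Library.FuncSet"
begin

text \<open>Players are indexed by 0..k-1. Question tuples and answer
tuples are extensional functions nat => _ (elements of PiE {..<k} _).
The distribution mu is given by its probability mass function on question tuples.\<close>

record ('q, 'a) game =
  qs   :: "nat \<Rightarrow> 'q set"
  ans  :: "nat \<Rightarrow> 'a set"
  dist :: "(nat \<Rightarrow> 'q) \<Rightarrow> real"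
  pred :: "(nat \<Rightarrow> 'q) \<Rightarrow> (nat \<Rightarrow> 'a) \<Rightarrow> bool"

abbreviation questions :: "nat \<Rightarrow> ('q, 'a) game \<Rightarrow> (nat \<Rightarrow> 'q) set" where
  "questions k G \<equiv> PiE {..<k} (qs G)"

abbreviation answers :: "nat \<Rightarrow> ('q, 'a) game \<Rightarrow> (nat \<Rightarrow> 'a) set" where
  "answers k G \<equiv> PiE {..<k} (ans G)"

definition is_game :: "nat \<Rightarrow> ('q, 'a) game \<Rightarrow> bool" where
  "is_game k G \<longleftrightarrow>
     (\<forall>t<k. finite (qs G t) \<and> finite (ans G t) \<and> ans G t \<noteq> {}) \<and>
     (\<forall>x. 0 \<le> dist G x) \<and>
     (\<forall>x. x \<notin> questions k G \<longrightarrow> dist G x = 0) \<and>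
     (\<Sum>x\<in>questions k G. dist G x) = 1"

definition val :: "nat \<Rightarrow> ('q, 'a) game \<Rightarrow> real" where
  "val k G = Sup {(\<Sum>x\<in>questions k G. dist G x *
        (if pred G x (\<lambda>t\<in>{..<k}. f t (x t)) then 1 else 0)) | f.
        \<forall>t<k. \<forall>q\<in>qs G t. f t q \<in> ans G t}"

definition psd :: "nat \<Rightarrow> (nat \<Rightarrow> nat \<Rightarrow> complex) \<Rightarrow> bool" where
  "psd d P \<longleftrightarrow> (\<forall>v :: nat \<Rightarrow> complex.
      Im (\<Sum>i<d. \<Sum>j<d. cnj (v i) * P i j * v j) = 0 \<and>
      0 \<le> Re (\<Sum>i<d. \<Sum>j<d. cnj (v i) * P i j * v j))"

text \<open>M t q a is the POVM element of player t for question q and answer a.\<close>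
definition povm_strategy :: "nat \<Rightarrow> ('q, 'a) game \<Rightarrow> nat \<Rightarrow>
    (nat \<Rightarrow> 'q \<Rightarrow> 'a \<Rightarrow> nat \<Rightarrow> nat \<Rightarrow> complex) \<Rightarrow> bool" where
  "povm_strategy k G d M \<longleftrightarrow>
     (\<forall>t<k. \<forall>q\<in>qs G t.
        (\<forall>a\<in>ans G t. psd d (M t q a)) \<and>
        (\<forall>i<d. \<forall>j<d. (\<Sum>a\<in>ans G t. M t q a i j) = (if i = j then 1 else 0)))"

text \<open>Vectors in (C^d)^{\<otimes>k} are functions on basis index tuples in PiE {..<k} (\<lambda>_. {..<d}).\<close>
abbreviation basis_idx :: "nat \<Rightarrow> nat \<Rightarrow> (nat \<Rightarrow> nat) set" where
  "basis_idx k d \<equiv> PiE {..<k} (\<lambda>_. {..<d})"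

definition unit_state :: "nat \<Rightarrow> nat \<Rightarrow> ((nat \<Rightarrow> nat) \<Rightarrow> complex) \<Rightarrow> bool" where
  "unit_state k d \<psi> \<longleftrightarrow> (\<Sum>i\<in>basis_idx k d. (cmod (\<psi> i))\<^sup>2) = 1"

text \<open>\<langle>\<psi>| M^1(x^1,a^1) \<otimes> ... \<otimes> M^k(x^k,a^k) |\<psi>\<rangle>\<close>
definition tensor_expect ::
  "nat \<Rightarrow> nat \<Rightarrow> ((nat \<Rightarrow> nat) \<Rightarrow> complex) \<Rightarrow>
   (nat \<Rightarrow> 'q \<Rightarrow> 'a \<Rightarrow> nat \<Rightarrow> nat \<Rightarrow> complex) \<Rightarrow> (nat \<Rightarrow> 'q) \<Rightarrow> (nat \<Rightarrow> 'a) \<Rightarrow> complex" where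
  "tensor_expect k d \<psi> M x a =
     (\<Sum>i\<in>basis_idx k d. \<Sum>j\<in>basis_idx k d.
        cnj (\<psi> i) * (\<Prod>t<k. M t (x t) (a t) (i t) (j t)) * \<psi> j)"

definition ent_strategy_value ::
  "nat \<Rightarrow> ('q, 'a) game \<Rightarrow> nat \<Rightarrow> ((nat \<Rightarrow> nat) \<Rightarrow> complex) \<Rightarrow>
   (nat \<Rightarrow> 'q \<Rightarrow> 'a \<Rightarrow> nat \<Rightarrow> nat \<Rightarrow> complex) \<Rightarrow> real" where
  "ent_strategy_value k G d \<psi> M =
     Re (\<Sum>x\<in>questions k G. complex_of_real (dist G x) *
          (\<Sum>a\<in>{a\<in>answers k G. pred G x a}. tensor_expect k d \<psi> M x a))"

definition val_ent :: "nat \<Rightarrow> ('q, 'a) game \<Rightarrow> real" where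
  "val_ent k G = Sup {ent_strategy_value k G d \<psi> M | d \<psi> M.
       2 \<le> d \<and> unit_state k d \<psi> \<and> povm_strategy k G d M}"

definition marg :: "nat \<Rightarrow> ('q, 'a) game \<Rightarrow> nat set \<Rightarrow> (nat \<Rightarrow> 'q) \<Rightarrow> real" where
  "marg k G S x = (\<Sum>x'\<in>{x'\<in>questions k G. \<forall>t\<in>S. x' t = x t}. dist G x')"

definition anchored :: "nat \<Rightarrow> real \<Rightarrow> ('q, 'a) game \<Rightarrow> bool" where
  "anchored k \<alpha> G \<longleftrightarrow> is_game k G \<and>
     (\<exists>Xp :: nat \<Rightarrow> 'q set.
        (\<forall>t<k. Xp t \<subseteq> qs G t) \<and>
        (\<forall>t<k. \<alpha> \<le> (\<Sum>x\<in>{x\<in>questions k G. x t \<in> Xp t}. dist G x)) \<and>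
        (\<forall>x\<in>questions k G.
           let F = {t\<in>{..<k}. x t \<in> Xp t} in
           dist G x = marg k G ({..<k} - F) x * (\<Prod>t\<in>F. marg k G {t} x)))"

text \<open>The game G_\<perp>; the new symbol \<perp> is None, an original question q is Some q.\<close>
definition perp_game :: "nat \<Rightarrow> real \<Rightarrow> ('q, 'a) game \<Rightarrow> ('q option, 'a) game" where
  "perp_game k \<alpha> G =
     \<lparr> qs = (\<lambda>t. insert None (Some ` qs G t)),
       ans = ans G,
       dist = (\<lambda>y. if y \<in> PiE {..<k} (\<lambda>t. insert None (Some ` qs G t))
                  then (\<Sum>x\<in>questions k G. dist G x *
                          (\<Prod>t<k. if y t = None then \<alpha>
                                   else if y t = Some (x t) then 1 - \<alpha> else 0))
                  else 0),
       pred = (\<lambda>y a. (\<exists>t<k. y t = None) \<or> pred G (\<lambda>t\<in>{..<k}. the (y t)) a) \<rparr>"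

end

theory Submission
  imports Defs
begin

text \<open>Condition on the original question tuple \<open>x\<close>. Each coordinate independently stays
  \<open>Some (x t)\<close> with probability \<open>1 - \<alpha>\<close> and becomes \<open>\<perp>\<close> otherwise; if some coordinate is
  \<open>\<perp>\<close> the players win outright. Hence any strategy for \<open>G\<^sub>\<perp>\<close> wins with probability
  \<open>1 - (1 - \<alpha>)^k (1 - w)\<close>, where \<open>w\<close> is the value in \<open>G\<close> of its restriction to the
  questions \<open>Some q\<close>, and every strategy for \<open>G\<close> is such a restriction. Both value
  formulas follow by taking suprema through this increasing affine map, which requires
  strategy values to be bounded; in the entangled case this rests on
  \<open>\<langle>\<psi>| A\<^sub>1 \<otimes> \<dots> \<otimes> A\<^sub>k |\<psi>\<rangle> \<ge> 0\<close> for positive semidefinite \<open>A\<^sub>t\<close>, proved by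
  Gram-decomposing the factors one at a time. The game is anchored with anchor sets \<open>{\<perp>}\<close>,
  because the \<open>\<perp>\<close>-coordinates are chosen independently of everything else.\<close>

section \<open>Positive semidefinite matrices\<close>


definition quad_form :: "nat \<Rightarrow> (nat \<Rightarrow> nat \<Rightarrow> complex) \<Rightarrow> (nat \<Rightarrow> complex) \<Rightarrow> complex" where
  "quad_form d A v = (\<Sum>i<d. \<Sum>j<d. cnj (v i) * A i j * v j)"

lemma psd_iff_quad_form:
  "psd d A \<longleftrightarrow> (\<forall>v. Im (quad_form d A v) = 0 \<and> 0 \<le> Re (quad_form d A v))"
  by (simp add: psd_def quad_form_def)

lemma sum_mult_delta_right [simp]:
  "m < (d::nat) \<Longrightarrow> (\<Sum>j<d. f j * (if j = m then t else 0)) = f m * (t :: 'a::semiring_0)"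
  by (simp add: if_distrib[of "(*) _"] cong: if_cong)

lemma sum_mult_delta_left [simp]:
  "m < (d::nat) \<Longrightarrow> (\<Sum>j<d. (if j = m then t else 0) * f j) = (t :: 'a::semiring_0) * f m"
  by (simp add: if_distrib[of "\<lambda>x. x * _"] cong: if_cong)

lemma quad_form_add_unit:
  assumes m: "m < d"
  shows "quad_form d A (\<lambda>i. v i + (if i = m then t else 0)) =
    quad_form d A v + cnj t * (\<Sum>j<d. A m j * v j) + t * (\<Sum>i<d. cnj (v i) * A i m) + cnj t * t * A m m"
proof -
  define u where "u i = (if i = m then t else 0)" for i
  have cu: "cnj (u i) = (if i = m then cnj t else 0)" for i by (simp add: u_def)
  have "quad_form d A (\<lambda>i. v i + u i) = quad_form d A v + (\<Sum>i<d. cnj (u i) * (\<Sum>j<d. A i j * v j))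
      + (\<Sum>i<d. \<Sum>j<d. (cnj (v i) * A i j) * u j) + (\<Sum>i<d. cnj (u i) * (\<Sum>j<d. A i j * u j))"
    unfolding quad_form_def by (simp add: sum.distrib sum_distrib_left algebra_simps)
  also have "(\<Sum>i<d. cnj (u i) * (\<Sum>j<d. A i j * v j)) = cnj t * (\<Sum>j<d. A m j * v j)"
    using m unfolding cu by simp
  also have "(\<Sum>i<d. \<Sum>j<d. (cnj (v i) * A i j) * u j) = t * (\<Sum>i<d. cnj (v i) * A i m)"
    using m by (simp add: u_def sum_distrib_left mult.commute)
  also have "(\<Sum>i<d. cnj (u i) * (\<Sum>j<d. A i j * u j)) = cnj t * t * A m m"
    using m unfolding cu by (simp add: u_def)
  finally show ?thesis unfolding u_def .
qed

lemma quad_form_unit: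
  "m < d \<Longrightarrow> quad_form d A (\<lambda>i. if i = m then t else 0) = cnj t * t * A m m"
  using quad_form_add_unit[of m d A "\<lambda>_. 0" t] by (simp add: quad_form_def)

lemma quad_form_two_units:
  assumes "m < d" "b < d" "b \<noteq> m"
  shows "quad_form d A (\<lambda>i. (if i = b then 1 else 0) + (if i = m then t else 0)) =
         A b b + cnj t * A m b + t * A b m + cnj t * t * A m m"
  using assms quad_form_add_unit[of m d A "\<lambda>i. if i = b then 1 else 0" t] quad_form_unit[of b d A 1]
  by (simp add: if_distrib[of cnj] cong: if_cong)

lemma psd_diag:
  assumes "psd d A" "m < d"
  shows "Im (A m m) = 0" "0 \<le> Re (A m m)"
proof -
  have "quad_form d A (\<lambda>i. if i = m then 1 else 0) = A m m"
    using quad_form_unit[OF assms(2), of A 1] by simp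
  then show "Im (A m m) = 0" "0 \<le> Re (A m m)"
    using assms(1) unfolding psd_iff_quad_form by metis+
qed

lemma psd_hermitian:
  assumes A: "psd d A" and a: "a < d" and b: "b < d"
  shows "A a b = cnj (A b a)"
proof (cases "a = b")
  case True
  then show ?thesis using psd_diag[OF A a] by (simp add: complex_eq_iff)
next
  case False
  have real_diag: "Im (A a a) = 0" "Im (A b b) = 0"
    using psd_diag[OF A a] psd_diag[OF A b] by auto
  have "Im (quad_form d A (\<lambda>i. (if i = a then 1 else 0) + (if i = b then t else 0))) = 0" for t
    using A unfolding psd_iff_quad_form by blast
  from this[of 1] this[of \<i>] have "Im (A b a) + Im (A a b) = 0" "Re (A a b) - Re (A b a) = 0"
    using quad_form_two_units[OF b a, of A] False real_diag by simp_all
  then show ?thesis by (simp add: complex_eq_iff)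
qed

text \<open>If the row were nonzero, a suitable perturbation of a unit vector would make the
  quadratic form negative.\<close>
lemma psd_zero_diag_row:
  assumes A: "psd d A" and m: "m < d" and "A m m = 0" and b: "b < d"
  shows "A m b = 0"
proof (rule ccontr)
  define z where "z = A m b"
  assume "A m b \<noteq> 0"
  then have bm: "b \<noteq> m" and zpos: "(cmod z)\<^sup>2 > 0" using assms by (auto simp: z_def)
  have hz: "A b m = cnj z" using psd_hermitian[OF A b m] z_def by simp
  define r where "r = (Re (A b b) + 1) / (2 * (cmod z)\<^sup>2)"
  define t where "t = - complex_of_real r * z"
  have tz: "cnj t * z = - complex_of_real (r * (cmod z)\<^sup>2)" "t * cnj z = - complex_of_real (r * (cmod z)\<^sup>2)"
    using cmod_power2[of z] unfolding t_def by (simp_all add: complex_eq_iff algebra_simps power2_eq_square)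
  have "0 \<le> Re (quad_form d A (\<lambda>i. (if i = b then 1 else 0) + (if i = m then t else 0)))"
    using A unfolding psd_iff_quad_form by blast
  also have "\<dots> = Re (A b b) + Re (cnj t * z) + Re (t * cnj z)"
    using quad_form_two_units[OF m b bm, of A t] \<open>A m m = 0\<close> hz z_def by simp
  also have "\<dots> = - 1"
    unfolding tz r_def using zpos by simp
  finally show False by simp
qed

text \<open>The quadratic form of the Schur complement at \<open>v\<close> is that of \<open>A\<close> at a shift of \<open>v\<close>
  in coordinate \<open>m\<close>.\<close>
lemma psd_schur_complement:
  assumes A: "psd d A" and m: "m < d" and pos: "Re (A m m) > 0"
  shows "psd d (\<lambda>a b. A a b - A a m * A m b / A m m)"
  unfolding psd_iff_quad_form
proof
  fix v
  define p where "p = A m m"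
  define s where "s = (\<Sum>b<d. A m b * v b)"
  have cs: "(\<Sum>a<d. cnj (v a) * A a m) = cnj s"
    unfolding s_def by (auto intro!: sum.cong simp: psd_hermitian[OF A _ m] mult.commute)
  have cp: "cnj p = p" and p0: "p \<noteq> 0"
    using psd_diag[OF A m] pos unfolding p_def by (auto simp: complex_eq_iff)
  have "quad_form d (\<lambda>a b. A a b - A a m * A m b / A m m) v =
        quad_form d A v - (\<Sum>a<d. \<Sum>b<d. cnj (v a) * A a m * (A m b * v b) / p)"
    unfolding quad_form_def p_def by (simp add: sum_subtractf algebra_simps)
  also have "(\<Sum>a<d. \<Sum>b<d. cnj (v a) * A a m * (A m b * v b) / p) = (\<Sum>a<d. cnj (v a) * A a m) * s / p"
    unfolding s_def by (simp add: sum_distrib_left sum_distrib_right sum_divide_distrib) (rule sum.swap)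
  also have "\<dots> = cnj s * s / p"
    using cs by simp
  also have "quad_form d A v - cnj s * s / p = quad_form d A (\<lambda>i. v i + (if i = m then - s / p else 0))"
    unfolding quad_form_add_unit[OF m] cs s_def[symmetric] p_def[symmetric] using cp p0
    by (simp add: field_simps)
  finally show "Im (quad_form d (\<lambda>a b. A a b - A a m * A m b / A m m) v) = 0 \<and>
        0 \<le> Re (quad_form d (\<lambda>a b. A a b - A a m * A m b / A m m) v)"
    using A unfolding psd_iff_quad_form by presburger
qed

text \<open>One step of a Cholesky-type decomposition. When \<open>A m m = 0\<close> the row vanishes, and
  the junk values of division by zero make the same formulas work.\<close>
lemma psd_split_row:
  assumes A: "psd d A" and m: "m < d"
  defines "w \<equiv> \<lambda>b. A m b / complex_of_real (sqrt (Re (A m m)))"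
    and "A' \<equiv> \<lambda>a b. A a b - A a m * A m b / A m m"
  shows "psd d A'" and "\<And>a b. a < d \<Longrightarrow> b < d \<Longrightarrow> A a b = cnj (w a) * w b + A' a b"
    and "\<And>b. b < d \<Longrightarrow> A' m b = 0 \<and> A' b m = 0"
proof -
  define r where "r = Re (A m m)"
  have r: "A m m = complex_of_real r" "r \<ge> 0"
    using psd_diag[OF A m] by (simp_all add: r_def complex_eq_iff)
  have zero_row: "A m b = 0 \<and> A b m = 0" if "r = 0" "b < d" for b
    using psd_zero_diag_row[OF A m _ that(2)] psd_hermitian[OF A that(2) m] r that(1) by simp
  show "psd d A'"
  proof (cases "r = 0")
    case True
    then have "A' = A" using r by (simp add: A'_def)
    then show ?thesis using A by simp
  qed (use psd_schur_complement[OF A m] r in \<open>simp add: A'_def\<close>)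
  show "A a b = cnj (w a) * w b + A' a b" if "a < d" "b < d" for a b
  proof (cases "r = 0")
    case True
    then show ?thesis using r by (simp add: w_def A'_def)
  next
    case False
    have "cnj (w a) * w b = cnj (A m a) * A m b / complex_of_real (sqrt r * sqrt r)"
      by (simp add: w_def flip: r_def of_real_mult)
    also have "\<dots> = A a m * A m b / A m m"
      using psd_hermitian[OF A that(1) m] r by simp
    finally show ?thesis by (simp add: A'_def)
  qed
  show "A' m b = 0 \<and> A' b m = 0" if "b < d" for b
    using zero_row[OF _ that] r by (cases "r = 0") (simp_all add: A'_def)
qed

lemma psd_gram_block:
  assumes "n \<le> d" "psd d A" "\<And>a b. a < d \<Longrightarrow> b < d \<Longrightarrow> a < d - n \<or> b < d - n \<Longrightarrow> A a b = 0"
  shows "\<exists>w. \<forall>a<d. \<forall>b<d. A a b = (\<Sum>l\<in>{d - n..<d}. cnj (w l a) * w l b)"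
  using assms
proof (induction n arbitrary: A)
  case 0
  then show ?case by auto
next
  case (Suc n)
  define m where "m = d - Suc n"
  have m: "m < d" "d - n = Suc m" using Suc.prems(1) by (auto simp: m_def)
  define w0 where "w0 = (\<lambda>b. A m b / complex_of_real (sqrt (Re (A m m))))"
  define A' where "A' = (\<lambda>a b. A a b - A a m * A m b / A m m)"
  note split = psd_split_row[OF Suc.prems(2) m(1)]
  have decomp: "A a b = cnj (w0 a) * w0 b + A' a b" if "a < d" "b < d" for a b
    using split(2)[OF that] by (simp add: w0_def A'_def)
  have A'_zero: "A' a b = 0" if ab: "a < d" "b < d" "a < d - n \<or> b < d - n" for a b
  proof -
    have row_m: "A' m c = 0" "A' c m = 0" if "c < d" for c
      using split(3)[OF that] by (simp_all add: A'_def)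
    consider "a < m" | "b < m" | "a = m" | "b = m" using ab m(2) by linarith
    then show ?thesis
    proof cases
      case 1
      then show ?thesis using Suc.prems(3)[of a b] Suc.prems(3)[of a m] ab m by (simp add: A'_def m_def)
    next
      case 2
      then show ?thesis using Suc.prems(3)[of a b] Suc.prems(3)[of m b] ab m by (simp add: A'_def m_def)
    qed (use row_m ab in simp_all)
  qed
  have "\<exists>w. \<forall>a<d. \<forall>b<d. A' a b = (\<Sum>l\<in>{d - n..<d}. cnj (w l a) * w l b)"
  proof (rule Suc.IH)
    show "n \<le> d" "psd d A'" using Suc.prems(1) split(1) by (simp_all add: A'_def)
  qed (rule A'_zero)
  then obtain w where w: "\<forall>a<d. \<forall>b<d. A' a b = (\<Sum>l\<in>{d - n..<d}. cnj (w l a) * w l b)"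
    by blast
  have "A a b = (\<Sum>l\<in>{m..<d}. cnj ((w(m := w0)) l a) * (w(m := w0)) l b)" if "a < d" "b < d" for a b
  proof -
    have "{m..<d} = insert m {d - n..<d}" using m by auto
    then have "(\<Sum>l\<in>{m..<d}. cnj ((w(m := w0)) l a) * (w(m := w0)) l b) =
        cnj (w0 a) * w0 b + (\<Sum>l\<in>{d - n..<d}. cnj (w l a) * w l b)"
      using m(2) by (simp add: sum.insert)
    then show ?thesis using decomp[OF that] w that by simp
  qed
  then show ?case unfolding m_def by blast
qed

lemma psd_gram:
  assumes "psd d A"
  shows "\<exists>w. \<forall>a<d. \<forall>b<d. A a b = (\<Sum>l<d. cnj (w l a) * w l b)"
  using psd_gram_block[of d d A] assms by (simp add: atLeast0LessThan)

section \<open>Tensor products of positive semidefinite matrices\<close>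

lemma sesquilinear_gram:
  assumes "\<forall>a<d. \<forall>b<d. A a b = (\<Sum>l<d. cnj (w l a) * w l b)"
  shows "(\<Sum>a<d. \<Sum>b<d. cnj (x a) * A a b * y b) =
         (\<Sum>l<d. cnj (\<Sum>a<d. w l a * x a) * (\<Sum>b<d. w l b * y b))"
proof -
  have "(\<Sum>a<d. \<Sum>b<d. cnj (x a) * A a b * y b) =
        (\<Sum>a<d. \<Sum>b<d. \<Sum>l<d. cnj (w l a * x a) * (w l b * y b))"
    using assms by (intro sum.cong refl) (simp add: sum_distrib_left sum_distrib_right mult_ac)
  also have "\<dots> = (\<Sum>a<d. \<Sum>l<d. \<Sum>b<d. cnj (w l a * x a) * (w l b * y b))"
    by (rule sum.cong[OF refl]) (rule sum.swap)
  also have "\<dots> = (\<Sum>l<d. \<Sum>a<d. \<Sum>b<d. cnj (w l a * x a) * (w l b * y b))"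
    by (rule sum.swap)
  also have "\<dots> = (\<Sum>l<d. cnj (\<Sum>a<d. w l a * x a) * (\<Sum>b<d. w l b * y b))"
    by (simp add: sum_product)
  finally show ?thesis .
qed

lemma sum_PiE_lessThan_Suc:
  assumes "finite (B k)"
  shows "(\<Sum>g\<in>PiE {..<Suc k} B. F g) = (\<Sum>g\<in>PiE {..<k} B. \<Sum>y\<in>B k. F (g(k := y)))"
proof -
  have "(\<Sum>g\<in>PiE (insert k {..<k}) B. F g) = (\<Sum>(y, g)\<in>B k \<times> PiE {..<k} B. F (g(k := y)))"
    unfolding PiE_insert_eq by (subst sum.reindex[OF inj_combinator]) (simp_all add: case_prod_unfold)
  also have "\<dots> = (\<Sum>g\<in>PiE {..<k} B. \<Sum>y\<in>B k. F (g(k := y)))"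
    by (simp add: sum.cartesian_product [symmetric] sum.swap[of _ "B k"])
  finally show ?thesis by (simp add: lessThan_Suc)
qed

definition tensor_quad_form ::
  "nat \<Rightarrow> nat \<Rightarrow> (nat \<Rightarrow> nat \<Rightarrow> nat \<Rightarrow> complex) \<Rightarrow> ((nat \<Rightarrow> nat) \<Rightarrow> complex) \<Rightarrow> complex" where
  "tensor_quad_form k d A \<psi> =
     (\<Sum>i\<in>basis_idx k d. \<Sum>j\<in>basis_idx k d. cnj (\<psi> i) * (\<Prod>t<k. A t (i t) (j t)) * \<psi> j)"

text \<open>Gram-decompose the last factor: the form then becomes a sum of \<open>d\<close> forms of the
  remaining \<open>k\<close> factors, evaluated at the partial contractions of \<open>\<psi>\<close>.\<close>
lemma tensor_quad_form_nonneg: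
  "(\<And>t. t < k \<Longrightarrow> psd d (A t)) \<Longrightarrow> 0 \<le> Re (tensor_quad_form k d A \<psi>)"
proof (induction k arbitrary: \<psi>)
  case 0
  then show ?case by (simp add: tensor_quad_form_def)
next
  case (Suc k)
  obtain w where w: "\<forall>a<d. \<forall>b<d. A k a b = (\<Sum>l<d. cnj (w l a) * w l b)"
    using psd_gram Suc.prems by blast
  let ?B = "basis_idx k d"
  define P where "P g h = (\<Prod>t<k. A t (g t) (h t))" for g h
  define \<phi> where "\<phi> l g = (\<Sum>a<d. w l a * \<psi> (g(k := a)))" for l g
  have prod_Suc: "(\<Prod>t<Suc k. A t ((g(k := a)) t) ((h(k := b)) t)) = P g h * A k a b" for g h a b
    unfolding P_def by (simp add: lessThan_Suc)
  have "tensor_quad_form (Suc k) d A \<psi> =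
      (\<Sum>g\<in>?B. \<Sum>a<d. \<Sum>h\<in>?B. \<Sum>b<d. cnj (\<psi> (g(k := a))) * (P g h * A k a b) * \<psi> (h(k := b)))"
    unfolding tensor_quad_form_def sum_PiE_lessThan_Suc[of "\<lambda>_. {..<d}", simplified] prod_Suc
    by (simp add: sum_distrib_left sum_distrib_right)
  also have "\<dots> = (\<Sum>g\<in>?B. \<Sum>h\<in>?B. \<Sum>a<d. \<Sum>b<d. cnj (\<psi> (g(k := a))) * (P g h * A k a b) * \<psi> (h(k := b)))"
    by (rule sum.cong[OF refl]) (rule sum.swap)
  also have "\<dots> = (\<Sum>g\<in>?B. \<Sum>h\<in>?B. P g h * (\<Sum>a<d. \<Sum>b<d. cnj (\<psi> (g(k := a))) * A k a b * \<psi> (h(k := b))))"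
    by (simp add: sum_distrib_left mult_ac)
  also have "\<dots> = (\<Sum>g\<in>?B. \<Sum>h\<in>?B. \<Sum>l<d. cnj (\<phi> l g) * P g h * \<phi> l h)"
    unfolding sesquilinear_gram[OF w] \<phi>_def by (simp add: sum_distrib_left mult_ac)
  also have "\<dots> = (\<Sum>g\<in>?B. \<Sum>l<d. \<Sum>h\<in>?B. cnj (\<phi> l g) * P g h * \<phi> l h)"
    by (rule sum.cong[OF refl]) (rule sum.swap)
  also have "\<dots> = (\<Sum>l<d. tensor_quad_form k d A (\<phi> l))"
    unfolding tensor_quad_form_def P_def by (rule sum.swap)
  finally have "Re (tensor_quad_form (Suc k) d A \<psi>) = (\<Sum>l<d. Re (tensor_quad_form k d A (\<phi> l)))"
    by simp
  also have "\<dots> \<ge> 0" using Suc by (intro sum_nonneg) auto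
  finally show ?case .
qed

section \<open>The anchored game\<close>

text \<open>The probability that the referee sends \<open>y\<close> to a player whose question in \<open>G\<close> is \<open>q\<close>.\<close>
definition anchor_weight :: "real \<Rightarrow> 'q \<Rightarrow> 'q option \<Rightarrow> real" where
  "anchor_weight \<alpha> q y = (if y = None then \<alpha> else if y = Some q then 1 - \<alpha> else 0)"

lemma qs_perp_game [simp]: "qs (perp_game k \<alpha> G) = (\<lambda>t. insert None (Some ` qs G t))"
  and ans_perp_game [simp]: "ans (perp_game k \<alpha> G) = ans G"
  and pred_perp_game [simp]:
    "pred (perp_game k \<alpha> G) = (\<lambda>y a. (\<exists>t<k. y t = None) \<or> pred G (\<lambda>t\<in>{..<k}. the (y t)) a)"
  by (simp_all add: perp_game_def)

lemma dist_perp_game: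
  "dist (perp_game k \<alpha> G) y = (if y \<in> questions k (perp_game k \<alpha> G)
     then (\<Sum>x\<in>questions k G. dist G x * (\<Prod>t<k. anchor_weight \<alpha> (x t) (y t))) else 0)"
  by (simp add: perp_game_def anchor_weight_def)

lemma sum_anchor_weight:
  assumes "finite S" "q \<in> S"
  shows "(\<Sum>y\<in>insert None (Some ` S). anchor_weight \<alpha> q y) = 1"
proof -
  have "(\<Sum>y\<in>insert None (Some ` S). anchor_weight \<alpha> q y) = \<alpha> + (\<Sum>s\<in>S. if s = q then 1 - \<alpha> else 0)"
    using assms(1) by (simp add: sum.reindex anchor_weight_def)
  then show ?thesis using assms by simp
qed

lemma sum_anchor_weights_fixing:
  assumes G: "is_game k G" and x: "x \<in> questions k G" and C: "C \<subseteq> {..<k}"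
    and y0: "\<forall>s\<in>C. y0 s \<in> insert None (Some ` qs G s)"
  shows "(\<Sum>y\<in>{y\<in>questions k (perp_game k \<alpha> G). \<forall>s\<in>C. y s = y0 s}. \<Prod>t<k. anchor_weight \<alpha> (x t) (y t))
         = (\<Prod>s\<in>C. anchor_weight \<alpha> (x s) (y0 s))"
proof -
  let ?Y = "\<lambda>t. if t \<in> C then {y0 t} else insert None (Some ` qs G t)"
  have fin: "\<And>t. t < k \<Longrightarrow> finite (qs G t)" using G by (simp add: is_game_def)
  have Y: "{y\<in>questions k (perp_game k \<alpha> G). \<forall>s\<in>C. y s = y0 s} = PiE {..<k} ?Y"
    using C y0 by (auto simp: PiE_def Pi_def subset_iff split: if_splits; metis)
  have "(\<Sum>y\<in>{y\<in>questions k (perp_game k \<alpha> G). \<forall>s\<in>C. y s = y0 s}. \<Prod>t<k. anchor_weight \<alpha> (x t) (y t))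
     = (\<Prod>t<k. \<Sum>q\<in>?Y t. anchor_weight \<alpha> (x t) q)"
    unfolding Y by (rule prod_sum_PiE[symmetric]) (auto simp: fin)
  also have "\<dots> = (\<Prod>t<k. if t \<in> C then anchor_weight \<alpha> (x t) (y0 t) else 1)"
  proof (intro prod.cong refl)
    fix t assume "t \<in> {..<k}"
    then show "(\<Sum>q\<in>?Y t. anchor_weight \<alpha> (x t) q) = (if t \<in> C then anchor_weight \<alpha> (x t) (y0 t) else 1)"
      using sum_anchor_weight[OF fin PiE_mem[OF x]] by simp
  qed
  also have "\<dots> = (\<Prod>s\<in>C. anchor_weight \<alpha> (x s) (y0 s))"
    using C by (simp add: prod.If_cases Int_absorb1)
  finally show ?thesis .
qed

text \<open>Given \<open>x\<close>, all coordinates are kept with probability \<open>(1 - \<alpha>)^k\<close>; every other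
  question tuple either contains \<open>\<perp>\<close>, where the payoff is \<open>1\<close>, or has weight \<open>0\<close>.\<close>
lemma conditional_expectation_perp_game:
  assumes G: "is_game k G" and x: "x \<in> questions k G"
    and g: "\<And>y. y \<in> questions k (perp_game k \<alpha> G) \<Longrightarrow> \<exists>t<k. y t = None \<Longrightarrow> g y = 1"
  shows "(\<Sum>y\<in>questions k (perp_game k \<alpha> G). (\<Prod>t<k. anchor_weight \<alpha> (x t) (y t)) * g y)
       = 1 - (1 - \<alpha>) ^ k * (1 - g (\<lambda>t\<in>{..<k}. Some (x t)))"
proof -
  let ?Y = "questions k (perp_game k \<alpha> G)"
  let ?W = "\<lambda>y. \<Prod>t<k. anchor_weight \<alpha> (x t) (y t)"
  define y0 where "y0 = (\<lambda>t\<in>{..<k}. Some (x t))"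
  have finY: "finite ?Y" using G by (auto simp: is_game_def intro!: finite_PiE)
  have y0: "y0 \<in> ?Y" using x unfolding y0_def by (auto simp: PiE_def Pi_def)
  have off_y0: "?W y * (1 - g y) = 0" if y: "y \<in> ?Y - {y0}" for y
  proof -
    obtain t where t: "t < k" "y t \<noteq> y0 t"
      using y y0 by (metis DiffE PiE_ext insertI1 lessThan_iff)
    show ?thesis
    proof (cases "y t = None")
      case True
      then show ?thesis using g y t by auto
    next
      case False
      then have "anchor_weight \<alpha> (x t) (y t) = 0" using t unfolding y0_def anchor_weight_def by auto
      then show ?thesis using t by (metis lessThan_iff mult_eq_0_iff prod_zero_iff finite_lessThan)
    qed
  qed
  have "(\<Sum>y\<in>?Y. ?W y * (1 - g y)) = ?W y0 * (1 - g y0) + (\<Sum>y\<in>?Y - {y0}. ?W y * (1 - g y))"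
    by (rule sum.remove[OF finY y0])
  also have "(\<Sum>y\<in>?Y - {y0}. ?W y * (1 - g y)) = 0"
    using off_y0 by (intro sum.neutral) blast
  also have "?W y0 * (1 - g y0) + 0 = (1 - \<alpha>) ^ k * (1 - g y0)" by (simp add: y0_def anchor_weight_def)
  finally have "(\<Sum>y\<in>?Y. ?W y) - (\<Sum>y\<in>?Y. ?W y * g y) = (1 - \<alpha>) ^ k * (1 - g y0)"
    by (simp add: sum_subtractf algebra_simps)
  moreover have "(\<Sum>y\<in>?Y. ?W y) = 1"
    using sum_anchor_weights_fixing[OF G x, of "{}"] by simp
  ultimately show ?thesis unfolding y0_def by linarith
qed

lemma expectation_perp_game:
  assumes G: "is_game k G"
    and g: "\<And>y. y \<in> questions k (perp_game k \<alpha> G) \<Longrightarrow> \<exists>t<k. y t = None \<Longrightarrow> g y = 1"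
  shows "(\<Sum>y\<in>questions k (perp_game k \<alpha> G). dist (perp_game k \<alpha> G) y * g y)
       = 1 - (1 - \<alpha>) ^ k * (1 - (\<Sum>x\<in>questions k G. dist G x * g (\<lambda>t\<in>{..<k}. Some (x t))))"
proof -
  let ?Y = "questions k (perp_game k \<alpha> G)"
  have "(\<Sum>y\<in>?Y. dist (perp_game k \<alpha> G) y * g y) =
      (\<Sum>x\<in>questions k G. dist G x * (\<Sum>y\<in>?Y. (\<Prod>t<k. anchor_weight \<alpha> (x t) (y t)) * g y))"
    unfolding dist_perp_game by (simp add: sum_distrib_left sum_distrib_right mult.assoc) (rule sum.swap)
  also have "\<dots> = (\<Sum>x\<in>questions k G. dist G x * (1 - (1 - \<alpha>) ^ k * (1 - g (\<lambda>t\<in>{..<k}. Some (x t)))))"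
    using conditional_expectation_perp_game[OF G _ g] by (intro sum.cong refl) presburger
  also have "\<dots> = (\<Sum>x\<in>questions k G. dist G x) - (1 - \<alpha>) ^ k * ((\<Sum>x\<in>questions k G. dist G x)
        - (\<Sum>x\<in>questions k G. dist G x * g (\<lambda>t\<in>{..<k}. Some (x t))))"
    by (simp add: algebra_simps sum_subtractf sum_distrib_left sum.distrib)
  also have "(\<Sum>x\<in>questions k G. dist G x) = 1" using G by (simp add: is_game_def)
  finally show ?thesis .
qed

lemma is_game_perp_game:
  assumes G: "is_game k G" and "0 \<le> \<alpha>" "\<alpha> \<le> 1"
  shows "is_game k (perp_game k \<alpha> G)"
proof -
  have "(\<Sum>y\<in>questions k (perp_game k \<alpha> G). dist (perp_game k \<alpha> G) y * 1) = 1"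
    using expectation_perp_game[OF G, of \<alpha> "\<lambda>_. 1"] G by (simp add: is_game_def)
  moreover have "0 \<le> dist (perp_game k \<alpha> G) y" for y
    using G assms unfolding dist_perp_game is_game_def anchor_weight_def
    by (auto intro!: sum_nonneg mult_nonneg_nonneg prod_nonneg)
  ultimately show ?thesis
    using G unfolding is_game_def by (auto simp: dist_perp_game)
qed

lemma marg_perp_game:
  assumes G: "is_game k G" and S: "S \<subseteq> {..<k}" and y: "y \<in> questions k (perp_game k \<alpha> G)"
  shows "marg k (perp_game k \<alpha> G) S y = (\<Sum>x\<in>questions k G. dist G x * (\<Prod>s\<in>S. anchor_weight \<alpha> (x s) (y s)))"
proof -
  let ?R = "{y'\<in>questions k (perp_game k \<alpha> G). \<forall>t\<in>S. y' t = y t}"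
  have "marg k (perp_game k \<alpha> G) S y =
      (\<Sum>y'\<in>?R. \<Sum>x\<in>questions k G. dist G x * (\<Prod>t<k. anchor_weight \<alpha> (x t) (y' t)))"
    unfolding marg_def by (intro sum.cong refl) (simp add: dist_perp_game)
  also have "\<dots> = (\<Sum>x\<in>questions k G. dist G x * (\<Sum>y'\<in>?R. \<Prod>t<k. anchor_weight \<alpha> (x t) (y' t)))"
    by (subst sum.swap) (simp add: sum_distrib_left)
  also have "\<dots> = (\<Sum>x\<in>questions k G. dist G x * (\<Prod>s\<in>S. anchor_weight \<alpha> (x s) (y s)))"
  proof -
    have "\<forall>s\<in>S. y s \<in> insert None (Some ` qs G s)" using y S by (auto dest: PiE_mem)
    then show ?thesis using sum_anchor_weights_fixing[OF G _ S] by (intro sum.cong refl) simp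
  qed
  finally show ?thesis .
qed

lemma marg_perp_game_perp:
  assumes G: "is_game k G" and t: "t < k" and y: "y \<in> questions k (perp_game k \<alpha> G)" and "y t = None"
  shows "marg k (perp_game k \<alpha> G) {t} y = \<alpha>"
  using marg_perp_game[OF G _ y, of "{t}"] assms
  by (simp add: anchor_weight_def is_game_def flip: sum_distrib_right)

text \<open>The anchor sets are \<open>{\<perp>}\<close>: the weight of a question tuple of \<open>G\<^sub>\<perp>\<close> factors into
  \<open>\<alpha>\<close> for each \<open>\<perp>\<close>-coordinate times the marginal of the remaining coordinates.\<close>
lemma anchored_perp_game:
  assumes G: "is_game k G" and "0 \<le> \<alpha>" "\<alpha> \<le> 1"
  shows "anchored k \<alpha> (perp_game k \<alpha> G)"
  unfolding anchored_def
proof (intro conjI is_game_perp_game[OF assms] exI[of _ "\<lambda>_. {None}"] allI impI ballI)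
  fix t assume t: "t < k"
  show "{None} \<subseteq> qs (perp_game k \<alpha> G) t" by simp
  obtain y where y: "y \<in> questions k (perp_game k \<alpha> G)" "y t = None"
    using t by (intro that[of "\<lambda>s\<in>{..<k}. None"]) auto
  have "{x \<in> questions k (perp_game k \<alpha> G). x t \<in> {None}} =
      {x \<in> questions k (perp_game k \<alpha> G). \<forall>s\<in>{t}. x s = y s}"
    using y by auto
  then show "\<alpha> \<le> (\<Sum>x\<in>{x \<in> questions k (perp_game k \<alpha> G). x t \<in> {None}}. dist (perp_game k \<alpha> G) x)"
    using marg_perp_game_perp[OF G t y] unfolding marg_def by simp
next
  fix y assume y: "y \<in> questions k (perp_game k \<alpha> G)"
  define F where "F = {t \<in> {..<k}. y t \<in> {None}}"
  have F: "F \<subseteq> {..<k}" unfolding F_def by auto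
  have "(\<Prod>t<k. anchor_weight \<alpha> (x t) (y t)) =
      (\<Prod>s\<in>{..<k} - F. anchor_weight \<alpha> (x s) (y s)) * \<alpha> ^ card F" for x
  proof -
    have "(\<Prod>t<k. anchor_weight \<alpha> (x t) (y t)) =
        (\<Prod>s\<in>{..<k} - F. anchor_weight \<alpha> (x s) (y s)) * (\<Prod>s\<in>F. anchor_weight \<alpha> (x s) (y s))"
      using F by (intro prod.subset_diff) auto
    also have "(\<Prod>s\<in>F. anchor_weight \<alpha> (x s) (y s)) = (\<Prod>s\<in>F. \<alpha>)"
      by (intro prod.cong refl) (auto simp: F_def anchor_weight_def)
    finally show ?thesis by simp
  qed
  then have "dist (perp_game k \<alpha> G) y =
      (\<Sum>x\<in>questions k G. dist G x * (\<Prod>s\<in>{..<k} - F. anchor_weight \<alpha> (x s) (y s))) * \<alpha> ^ card F"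
    using y by (simp add: dist_perp_game sum_distrib_right mult.assoc)
  also have "\<dots> = marg k (perp_game k \<alpha> G) ({..<k} - F) y * (\<Prod>t\<in>F. marg k (perp_game k \<alpha> G) {t} y)"
    using marg_perp_game[OF G _ y, of "{..<k} - F"] marg_perp_game_perp[OF G _ y] by (simp add: F_def)
  finally show "let F = {t \<in> {..<k}. y t \<in> {None}} in
      dist (perp_game k \<alpha> G) y = marg k (perp_game k \<alpha> G) ({..<k} - F) y * (\<Prod>t\<in>F. marg k (perp_game k \<alpha> G) {t} y)"
    unfolding F_def Let_def .
qed

section \<open>Values\<close>

lemma Sup_image_affine:
  fixes S :: "real set"
  assumes "S \<noteq> {}" "bdd_above S" "0 \<le> e"
  shows "Sup ((\<lambda>v. 1 - e * (1 - v)) ` S) = 1 - e * (1 - Sup S)"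
proof -
  have "mono (\<lambda>v::real. 1 - e * (1 - v))"
    using assms(3) by (auto intro!: monoI mult_left_mono)
  moreover have "continuous (at_left (Sup S)) (\<lambda>v::real. 1 - e * (1 - v))"
    by (intro continuous_intros)
  ultimately show ?thesis using continuous_at_Sup_mono assms(1,2) by metis
qed

text \<open>Both value identities come from this: restriction \<open>r\<close> of a strategy for \<open>G\<^sub>\<perp>\<close> to the
  questions of \<open>G\<close> is onto the strategies of \<open>G\<close> and transforms values affinely.\<close>
lemma Sup_strategy_values_transfer:
  fixes v :: "'s \<Rightarrow> real" and v' :: "'s' \<Rightarrow> real"
  assumes "r ` S' = S" and "\<And>s. s \<in> S' \<Longrightarrow> v' s = 1 - e * (1 - v (r s))"
    and "S \<noteq> {}" and "\<And>s. s \<in> S \<Longrightarrow> v s \<le> 1" and "0 \<le> e"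
  shows "Sup (v' ` S') = 1 - e * (1 - Sup (v ` S))"
proof -
  have "v' ` S' = (\<lambda>x. 1 - e * (1 - x)) ` v ` S"
    using assms(1,2) by (auto simp: image_image)
  moreover have "bdd_above (v ` S)" using assms(4) by (intro bdd_aboveI2)
  ultimately show ?thesis using Sup_image_affine assms(3,5) by simp
qed

definition classical_strategies :: "nat \<Rightarrow> ('q, 'a) game \<Rightarrow> (nat \<Rightarrow> 'q \<Rightarrow> 'a) set" where
  "classical_strategies k G = {f. \<forall>t<k. \<forall>q\<in>qs G t. f t q \<in> ans G t}"

definition classical_value :: "nat \<Rightarrow> ('q, 'a) game \<Rightarrow> (nat \<Rightarrow> 'q \<Rightarrow> 'a) \<Rightarrow> real" where
  "classical_value k G f =
     (\<Sum>x\<in>questions k G. dist G x * (if pred G x (\<lambda>t\<in>{..<k}. f t (x t)) then 1 else 0))"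

lemma val_eq_Sup_classical_value:
  "val k G = Sup (classical_value k G ` classical_strategies k G)"
  unfolding val_def classical_value_def classical_strategies_def by (simp add: setcompr_eq_image)

lemma classical_value_le_1:
  assumes G: "is_game k G" shows "classical_value k G f \<le> 1"
proof -
  have "classical_value k G f \<le> (\<Sum>x\<in>questions k G. dist G x)"
    unfolding classical_value_def using G by (intro sum_mono) (auto simp: is_game_def)
  then show ?thesis using G by (simp add: is_game_def)
qed

lemma classical_value_perp_game:
  assumes G: "is_game k G"
  shows "classical_value k (perp_game k \<alpha> G) f = 1 - (1 - \<alpha>) ^ k * (1 - classical_value k G (\<lambda>t q. f t (Some q)))"
proof -
  define g where "g y = (if pred (perp_game k \<alpha> G) y (\<lambda>t\<in>{..<k}. f t (y t)) then 1 else 0 :: real)" for y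
  have "classical_value k (perp_game k \<alpha> G) f =
      1 - (1 - \<alpha>) ^ k * (1 - (\<Sum>x\<in>questions k G. dist G x * g (\<lambda>t\<in>{..<k}. Some (x t))))"
    unfolding classical_value_def g_def[symmetric] by (rule expectation_perp_game[OF G]) (auto simp: g_def)
  also have "(\<Sum>x\<in>questions k G. dist G x * g (\<lambda>t\<in>{..<k}. Some (x t))) = classical_value k G (\<lambda>t q. f t (Some q))"
    unfolding classical_value_def g_def by (intro sum.cong refl) (simp add: PiE_restrict cong: restrict_cong)
  finally show ?thesis .
qed

lemma val_perp_game:
  assumes G: "is_game k G" and "0 \<le> \<alpha>" "\<alpha> \<le> 1"
  shows "val k (perp_game k \<alpha> G) = 1 - (1 - \<alpha>) ^ k * (1 - val k G)"
  unfolding val_eq_Sup_classical_value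
proof (rule Sup_strategy_values_transfer)
  have ans: "\<And>t. t < k \<Longrightarrow> ans G t \<noteq> {}" using G by (simp add: is_game_def)
  show "(\<lambda>f t q. f t (Some q)) ` classical_strategies k (perp_game k \<alpha> G) = classical_strategies k G"
  proof (intro equalityI subsetI)
    fix f assume "f \<in> classical_strategies k G"
    then have "(\<lambda>t q. case q of None \<Rightarrow> SOME a. a \<in> ans G t | Some q' \<Rightarrow> f t q') \<in> classical_strategies k (perp_game k \<alpha> G)"
      using ans by (auto simp: classical_strategies_def some_in_eq)
    then show "f \<in> (\<lambda>f t q. f t (Some q)) ` classical_strategies k (perp_game k \<alpha> G)"
      by (rule rev_image_eqI) simp
  qed (auto simp: classical_strategies_def)
  show "classical_strategies k G \<noteq> {}"
    using ans by (auto simp: classical_strategies_def some_in_eq intro!: exI[of _ "\<lambda>t q. SOME a. a \<in> ans G t"])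
qed (use assms classical_value_perp_game classical_value_le_1 in auto)

lemma tensor_expect_eq_tensor_quad_form:
  "tensor_expect k d \<psi> M x a = tensor_quad_form k d (\<lambda>t. M t (x t) (a t)) \<psi>"
  by (simp add: tensor_expect_def tensor_quad_form_def)

lemma sum_tensor_expect_answers:
  assumes M: "povm_strategy k G d M" and \<psi>: "unit_state k d \<psi>" and x: "\<And>t. t < k \<Longrightarrow> x t \<in> qs G t"
    and fin: "\<And>t. t < k \<Longrightarrow> finite (ans G t)"
  shows "(\<Sum>a\<in>answers k G. tensor_expect k d \<psi> M x a) = 1"
proof -
  let ?B = "basis_idx k d"
  have completeness: "(\<Sum>a\<in>answers k G. \<Prod>t<k. M t (x t) (a t) (i t) (j t)) = (if i = j then 1 else 0)"
    if ij: "i \<in> ?B" "j \<in> ?B" for i j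
  proof -
    have "(\<Sum>a\<in>answers k G. \<Prod>t<k. M t (x t) (a t) (i t) (j t)) = (\<Prod>t<k. \<Sum>a\<in>ans G t. M t (x t) a (i t) (j t))"
      by (rule prod_sum_PiE[symmetric]) (use fin in auto)
    also have "\<dots> = (\<Prod>t<k. if i t = j t then 1 else 0)"
    proof (intro prod.cong refl)
      fix t assume "t \<in> {..<k}"
      moreover have "i t < d" "j t < d" using ij calculation by (auto dest: PiE_mem)
      ultimately show "(\<Sum>a\<in>ans G t. M t (x t) a (i t) (j t)) = (if i t = j t then 1 else 0)"
        using M x unfolding povm_strategy_def by simp
    qed
    also have "\<dots> = (if i = j then 1 else 0)"
    proof -
      have "i = j \<longleftrightarrow> (\<forall>t<k. i t = j t)" using ij by (auto intro: PiE_ext)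
      then show ?thesis by (auto simp: prod_zero_iff)
    qed
    finally show ?thesis .
  qed
  have "(\<Sum>a\<in>answers k G. tensor_expect k d \<psi> M x a) =
        (\<Sum>i\<in>?B. \<Sum>j\<in>?B. cnj (\<psi> i) * (\<Sum>a\<in>answers k G. \<Prod>t<k. M t (x t) (a t) (i t) (j t)) * \<psi> j)"
    unfolding tensor_expect_def
    by (subst sum.swap) (simp add: sum_distrib_left sum_distrib_right sum.swap[of _ "answers k G"])
  also have "\<dots> = (\<Sum>i\<in>?B. \<Sum>j\<in>?B. if i = j then cnj (\<psi> i) * \<psi> i else 0)"
    using completeness by (intro sum.cong refl) auto
  also have "\<dots> = (\<Sum>i\<in>?B. cnj (\<psi> i) * \<psi> i)"
    by (simp add: finite_PiE)
  also have "\<dots> = complex_of_real (\<Sum>i\<in>?B. (cmod (\<psi> i))\<^sup>2)"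
    by (simp add: complex_norm_square mult.commute del: of_real_power)
  also have "\<dots> = 1" using \<psi> unfolding unit_state_def by simp
  finally show ?thesis .
qed

text \<open>The winning answers carry at most the total weight \<open>1\<close> because every term
  \<open>\<langle>\<psi>| M(x\<^sup>1,a\<^sup>1) \<otimes> \<dots> \<otimes> M(x\<^sup>k,a\<^sup>k) |\<psi>\<rangle>\<close> is nonnegative.\<close>
lemma ent_strategy_value_le_1:
  assumes G: "is_game k G" and M: "povm_strategy k G d M" and \<psi>: "unit_state k d \<psi>"
  shows "ent_strategy_value k G d \<psi> M \<le> 1"
proof -
  have fin: "\<And>t. t < k \<Longrightarrow> finite (ans G t)" using G by (simp add: is_game_def)
  have winning_le_1: "Re (\<Sum>a\<in>{a\<in>answers k G. pred G x a}. tensor_expect k d \<psi> M x a) \<le> 1"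
    if x: "x \<in> questions k G" for x
  proof -
    let ?W = "{a\<in>answers k G. pred G x a}"
    have xq: "\<And>t. t < k \<Longrightarrow> x t \<in> qs G t" using x by (auto dest: PiE_mem)
    have "(\<Sum>a\<in>answers k G. tensor_expect k d \<psi> M x a) =
        (\<Sum>a\<in>answers k G - ?W. tensor_expect k d \<psi> M x a) + (\<Sum>a\<in>?W. tensor_expect k d \<psi> M x a)"
      using fin by (intro sum.subset_diff) (auto intro: finite_PiE)
    then have "(\<Sum>a\<in>answers k G - ?W. tensor_expect k d \<psi> M x a) + (\<Sum>a\<in>?W. tensor_expect k d \<psi> M x a) = 1"
      using sum_tensor_expect_answers[OF M \<psi> xq fin] by simp
    then have "Re (\<Sum>a\<in>answers k G - ?W. tensor_expect k d \<psi> M x a) + Re (\<Sum>a\<in>?W. tensor_expect k d \<psi> M x a) = 1"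
      by (metis one_complex.sel plus_complex.sel)
    moreover have "0 \<le> Re (tensor_expect k d \<psi> M x a)" if "a \<in> answers k G" for a
      unfolding tensor_expect_eq_tensor_quad_form
      by (rule tensor_quad_form_nonneg) (use that xq M in \<open>auto simp: povm_strategy_def dest: PiE_mem\<close>)
    then have "0 \<le> Re (\<Sum>a\<in>answers k G - ?W. tensor_expect k d \<psi> M x a)"
      unfolding Re_sum by (intro sum_nonneg) auto
    ultimately show ?thesis by linarith
  qed
  have "ent_strategy_value k G d \<psi> M =
      (\<Sum>x\<in>questions k G. dist G x * Re (\<Sum>a\<in>{a\<in>answers k G. pred G x a}. tensor_expect k d \<psi> M x a))"
    unfolding ent_strategy_value_def Re_sum by (intro sum.cong refl) simp
  also have "\<dots> \<le> (\<Sum>x\<in>questions k G. dist G x * 1)"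
    using G winning_le_1 by (intro sum_mono mult_left_mono) (auto simp: is_game_def simp del: Re_sum)
  also have "\<dots> = 1" using G by (simp add: is_game_def)
  finally show ?thesis .
qed

lemma povm_strategy_perp_game_restrict:
  "povm_strategy k (perp_game k \<alpha> G) d M \<Longrightarrow> povm_strategy k G d (\<lambda>t q. M t (Some q))"
  unfolding povm_strategy_def by auto

lemma povm_strategy_perp_game_extend:
  assumes G: "is_game k G" and M: "povm_strategy k G d M"
  shows "povm_strategy k (perp_game k \<alpha> G) d
          (\<lambda>t q. case q of None \<Rightarrow> M t (SOME q. q \<in> qs G t) | Some q' \<Rightarrow> M t q')"
proof -
  have "qs G t \<noteq> {}" if "t < k" for t
    using G that by (auto simp: is_game_def PiE_eq_empty_iff)
  then have "(SOME q. q \<in> qs G t) \<in> qs G t" if "t < k" for t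
    using that by (simp add: some_in_eq)
  then show ?thesis using M unfolding povm_strategy_def by auto
qed

lemma ent_strategy_value_perp_game:
  assumes G: "is_game k G" and M: "povm_strategy k (perp_game k \<alpha> G) d M" and \<psi>: "unit_state k d \<psi>"
  shows "ent_strategy_value k (perp_game k \<alpha> G) d \<psi> M =
         1 - (1 - \<alpha>) ^ k * (1 - ent_strategy_value k G d \<psi> (\<lambda>t q. M t (Some q)))"
proof -
  define g where "g y = Re (\<Sum>a\<in>{a\<in>answers k G. pred (perp_game k \<alpha> G) y a}. tensor_expect k d \<psi> M y a)" for y
  have fin: "\<And>t. t < k \<Longrightarrow> finite (ans G t)" using G by (simp add: is_game_def)
  have "ent_strategy_value k (perp_game k \<alpha> G) d \<psi> M =
      (\<Sum>y\<in>questions k (perp_game k \<alpha> G). dist (perp_game k \<alpha> G) y * g y)"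
    unfolding ent_strategy_value_def Re_sum g_def by (intro sum.cong refl) simp
  also have "\<dots> = 1 - (1 - \<alpha>) ^ k * (1 - (\<Sum>x\<in>questions k G. dist G x * g (\<lambda>t\<in>{..<k}. Some (x t))))"
  proof (rule expectation_perp_game[OF G])
    fix y assume y: "y \<in> questions k (perp_game k \<alpha> G)" and "\<exists>t<k. y t = None"
    then have "{a\<in>answers k G. pred (perp_game k \<alpha> G) y a} = answers k (perp_game k \<alpha> G)"
      by auto
    moreover have "(\<Sum>a\<in>answers k (perp_game k \<alpha> G). tensor_expect k d \<psi> M y a) = 1"
      using y fin by (intro sum_tensor_expect_answers[OF M \<psi>]) (auto dest: PiE_mem)
    ultimately show "g y = 1" unfolding g_def by simp
  qed
  also have "(\<Sum>x\<in>questions k G. dist G x * g (\<lambda>t\<in>{..<k}. Some (x t))) =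
      ent_strategy_value k G d \<psi> (\<lambda>t q. M t (Some q))"
  proof -
    have "tensor_expect k d \<psi> M (\<lambda>t\<in>{..<k}. Some (x t)) a = tensor_expect k d \<psi> (\<lambda>t q. M t (Some q)) x a"
      for x a by (simp add: tensor_expect_def)
    moreover have "pred (perp_game k \<alpha> G) (\<lambda>t\<in>{..<k}. Some (x t)) a = pred G x a" if "x \<in> questions k G" for x a
      using that by (simp add: PiE_restrict cong: restrict_cong)
    ultimately show ?thesis
      unfolding ent_strategy_value_def Re_sum g_def by (intro sum.cong refl) simp
  qed
  finally show ?thesis .
qed

definition entangled_strategies :: "nat \<Rightarrow> ('q, 'a) game \<Rightarrow>
    (nat \<times> ((nat \<Rightarrow> nat) \<Rightarrow> complex) \<times> (nat \<Rightarrow> 'q \<Rightarrow> 'a \<Rightarrow> nat \<Rightarrow> nat \<Rightarrow> complex)) set" where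
  "entangled_strategies k G = {(d, \<psi>, M). 2 \<le> d \<and> unit_state k d \<psi> \<and> povm_strategy k G d M}"

lemma val_ent_eq_Sup_ent_strategy_value:
  "val_ent k G = Sup ((\<lambda>(d, \<psi>, M). ent_strategy_value k G d \<psi> M) ` entangled_strategies k G)"
  unfolding val_ent_def entangled_strategies_def by (rule arg_cong[of _ _ Sup]) force

lemma psd_identity_if: "psd d (\<lambda>i j. if P \<and> i = j then 1 else 0)"
proof (cases P)
  case True
  have "(\<Sum>j<d. cnj (v i) * (if P \<and> i = j then 1 else 0) * v j) = complex_of_real ((cmod (v i))\<^sup>2)"
    if "i < d" for v i
  proof -
    have "(\<Sum>j<d. cnj (v i) * (if P \<and> i = j then 1 else 0) * v j) = (\<Sum>j<d. if j = i then cnj (v i) * v i else 0)"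
      using True by (intro sum.cong) auto
    also have "\<dots> = v i * cnj (v i)" using that by simp
    also have "\<dots> = complex_of_real ((cmod (v i))\<^sup>2)" by (rule complex_norm_square[symmetric])
    finally show ?thesis .
  qed
  then have "quad_form d (\<lambda>i j. if P \<and> i = j then 1 else 0) v = complex_of_real (\<Sum>i<d. (cmod (v i))\<^sup>2)" for v
    unfolding quad_form_def of_real_sum by (intro sum.cong refl) simp
  then show ?thesis unfolding psd_iff_quad_form by (simp del: of_real_power add: sum_nonneg)
qed (simp add: psd_def)

lemma entangled_strategies_nonempty:
  fixes G :: "('q, 'a) game"
  assumes G: "is_game k G"
  shows "entangled_strategies k G \<noteq> {}"
proof -
  define \<psi> :: "(nat \<Rightarrow> nat) \<Rightarrow> complex" where "\<psi> i = (if i = (\<lambda>t\<in>{..<k}. 0) then 1 else 0)" for i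
  define M :: "nat \<Rightarrow> 'q \<Rightarrow> 'a \<Rightarrow> nat \<Rightarrow> nat \<Rightarrow> complex"
    where "M t q a i j = (if a = (SOME a. a \<in> ans G t) \<and> i = j then 1 else 0)" for t q a i j
  have "(\<Sum>i\<in>basis_idx k 2. (cmod (\<psi> i))\<^sup>2) = 1"
    by (simp add: \<psi>_def if_distrib[of "\<lambda>z. (cmod z)\<^sup>2"] finite_PiE cong: if_cong)
  then have "unit_state k 2 \<psi>"
    unfolding unit_state_def .
  moreover have "povm_strategy k G 2 M"
    unfolding povm_strategy_def M_def
  proof (intro allI impI ballI conjI psd_identity_if)
    fix t i j assume "t < k" "i < (2::nat)" "j < (2::nat)"
    then have "(SOME a. a \<in> ans G t) \<in> ans G t" "finite (ans G t)"
      using G by (auto simp: is_game_def some_in_eq)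
    then show "(\<Sum>a\<in>ans G t. if a = (SOME a. a \<in> ans G t) \<and> i = j then 1 else 0) = (if i = j then 1 else 0 :: complex)"
      by (cases "i = j") simp_all
  qed
  ultimately have "(2, \<psi>, M) \<in> entangled_strategies k G"
    unfolding entangled_strategies_def by blast
  then show ?thesis by blast
qed

lemma val_ent_perp_game:
  assumes G: "is_game k G" and "0 \<le> \<alpha>" "\<alpha> \<le> 1"
  shows "val_ent k (perp_game k \<alpha> G) = 1 - (1 - \<alpha>) ^ k * (1 - val_ent k G)"
  unfolding val_ent_eq_Sup_ent_strategy_value
proof (rule Sup_strategy_values_transfer)
  show "(\<lambda>(d, \<psi>, M). (d, \<psi>, \<lambda>t q. M t (Some q))) ` entangled_strategies k (perp_game k \<alpha> G) =
      entangled_strategies k G"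
  proof (intro equalityI subsetI)
    fix s assume "s \<in> entangled_strategies k G"
    then obtain d \<psi> M where s: "s = (d, \<psi>, M)" "2 \<le> d" "unit_state k d \<psi>" "povm_strategy k G d M"
      by (auto simp: entangled_strategies_def)
    let ?M' = "\<lambda>t q. case q of None \<Rightarrow> M t (SOME q. q \<in> qs G t) | Some q' \<Rightarrow> M t q'"
    have "(d, \<psi>, ?M') \<in> entangled_strategies k (perp_game k \<alpha> G)"
      using s povm_strategy_perp_game_extend[OF G s(4)] by (simp add: entangled_strategies_def)
    then show "s \<in> (\<lambda>(d, \<psi>, M). (d, \<psi>, \<lambda>t q. M t (Some q))) ` entangled_strategies k (perp_game k \<alpha> G)"
      by (rule rev_image_eqI) (simp add: s(1))
  qed (auto simp: entangled_strategies_def povm_strategy_perp_game_restrict)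
qed (use assms entangled_strategies_nonempty ent_strategy_value_perp_game ent_strategy_value_le_1 in
      \<open>auto simp: entangled_strategies_def\<close>)

theorem proposition3p6:
  fixes k :: nat and \<alpha> :: real and G :: "('q, 'a) game"
  assumes "1 \<le> k" and "0 < \<alpha>" and "\<alpha> \<le> 1" and "is_game k G"
  shows "anchored k \<alpha> (perp_game k \<alpha> G) \<and>
         val k (perp_game k \<alpha> G) = 1 - (1 - \<alpha>) ^ k * (1 - val k G) \<and>
         val_ent k (perp_game k \<alpha> G) = 1 - (1 - \<alpha>) ^ k * (1 - val_ent k G)"
  using anchored_perp_game[OF assms(4)] val_perp_game[OF assms(4)] val_ent_perp_game[OF assms(4)] assms(2,3)
  by simp

end
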